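(* Let $\lambda_1\neq\lambda_2$ be real numbers, $J_2=\mathrm{diag}(\lambda_1,\lambda_1,\lambda_2)$ and $h>0$. Let $\theta\in\mathbb{R}$ and define $$\phi=\frac{e^{\lambda_1h}-e^{\lambda_2h}}{(\lambda_1-\lambda_2)(1-\theta)+\theta(\lambda_1e^{\lambda_1h}-\lambda_2e^{\lambda_2h})},\qquad \psi=e^{\lambda_1h}(1-\phi\lambda_1\theta)-\phi\lambda_1(1-\theta).$$ Then (whenever these expressions are defined and $1-\phi\lambda_1\theta\neq0$, $1-\phi\lambda_2\theta\neq 0$) the difference scheme $$\frac{\mathbf{x}_{k+1}-\psi\mathbf{x}_k}{\phi}=J_2\big[\theta\mathbf{x}_{k+1}+(1-\theta)\mathbf{x}_k\big]$$ is exact for the system $\mathbf{x}'=J_2\mathbf{x}$.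
   Context: A one-step difference scheme with step size $h>0$ for $\mathbf{x}'=M\mathbf{x}$ is called exact if for every initial vector $\mathbf{x}_0$ the sequence $(\mathbf{x}_k)$ it generates satisfies $\mathbf{x}_k=\mathbf{x}(kh)$ for all $k\ge 0$, where $\mathbf{x}(t)$ solves $\mathbf{x}'=M\mathbf{x}$, $\mathbf{x}(0)=\mathbf{x}_0$. *)

theory Defs
  imports "HOL-Analysis.Analysis"
begin

definition ode_solution :: "real^'n^'n \<Rightarrow> real^'n \<Rightarrow> (real \<Rightarrow> real^'n) \<Rightarrow> bool" where
  "ode_solution M x0 x \<longleftrightarrow> x 0 = x0 \<and> (\<forall>t. (x has_vector_derivative (M *v x t)) (at t))"

definition exact_scheme :: "(real^'n \<Rightarrow> real^'n \<Rightarrow> bool) \<Rightarrow> real \<Rightarrow> real^'n^'n \<Rightarrow> bool" where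
  "exact_scheme step h M \<longleftrightarrow>
     (\<forall>x0 xs x. xs 0 = x0 \<and> (\<forall>k. step (xs k) (xs (Suc k))) \<and> ode_solution M x0 x
        \<longrightarrow> (\<forall>k. xs k = x (real k * h)))"

definition J2 :: "real \<Rightarrow> real \<Rightarrow> real^3^3" where
  "J2 l1 l2 = (\<chi> i j. if i = j then (vector [l1, l1, l2] :: real^3) $ i else 0)"

definition theta_scheme :: "real \<Rightarrow> real \<Rightarrow> real \<Rightarrow> real^'n^'n \<Rightarrow> real^'n \<Rightarrow> real^'n \<Rightarrow> bool" where
  "theta_scheme phi psi theta M xk xk1 \<longleftrightarrow>
     (1 / phi) *\<^sub>R (xk1 - psi *\<^sub>R xk) = M *v (theta *\<^sub>R xk1 + (1 - theta) *\<^sub>R xk)"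

end

theory Submission
  imports Defs
begin

text \<open>The scheme is exact for a diagonal system as soon as it is exact for each scalar equation
  \<open>x' = \<lambda> x\<close>, \<open>\<lambda>\<close> a diagonal entry. For such an equation the step reads
  \<open>(1 - \<phi>\<lambda>\<theta>) x\<^sub>k\<^sub>+\<^sub>1 = (\<psi> + \<phi>\<lambda>(1 - \<theta>)) x\<^sub>k\<close>, so it is exact iff
  \<open>\<psi> + \<phi>\<lambda>(1 - \<theta>) = e\<^sup>\<lambda>\<^sup>h (1 - \<phi>\<lambda>\<theta>)\<close>. For \<open>\<lambda> = \<lambda>\<^sub>1\<close> this is the definition of \<open>\<psi>\<close>,
  and for \<open>\<lambda> = \<lambda>\<^sub>2\<close> it is equivalent to the definition of \<open>\<phi>\<close>.\<close>

definition diag_matrix :: "real^'n \<Rightarrow> real^'n^'n" where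
  "diag_matrix d = (\<chi> i j. if i = j then d $ i else 0)"

lemma J2_eq_diag_matrix: "J2 l1 l2 = diag_matrix (vector [l1, l1, l2])"
  by (simp add: J2_def diag_matrix_def)

lemma diag_matrix_mult_vector_nth: "(diag_matrix d *v v) $ i = d $ i * v $ i"
  by (simp add: diag_matrix_def matrix_vector_mult_def if_distrib[of "\<lambda>c. c * _"] cong: if_cong)

lemma has_real_derivative_vec_nth:
  assumes "(x has_vector_derivative v) (at t)"
  shows "((\<lambda>s. x s $ i) has_real_derivative v $ i) (at t)"
  using bounded_linear.has_vector_derivative[OF bounded_linear_vec_nth assms]
  by (simp add: has_real_derivative_iff_has_vector_derivative)

lemma scalar_linear_ode_solution:
  fixes x :: "real \<Rightarrow> real"
  assumes deriv: "\<And>s. (x has_real_derivative l * x s) (at s)"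
  shows "x t = exp (l * t) * x 0"
proof -
  have "((\<lambda>s. exp (- l * s) * x s) has_real_derivative 0) (at s within UNIV)" for s
    using deriv[of s] by (auto intro!: derivative_eq_intros)
  then obtain c where c: "\<And>s. exp (- l * s) * x s = c"
    using has_field_derivative_zero_constant[OF convex_UNIV] by (metis UNIV_I)
  have "x t = exp (l * t) * (exp (- l * t) * x t)"
    by (simp add: mult.assoc[symmetric] exp_add[symmetric])
  also have "\<dots> = exp (l * t) * x 0"
    using c[of t] c[of 0] by simp
  finally show ?thesis .
qed

lemma ode_solution_diag_matrix_nth:
  assumes "ode_solution (diag_matrix d) x0 x"
  shows "x t $ i = exp (d $ i * t) * x0 $ i"
proof -
  have "((\<lambda>s. x s $ i) has_real_derivative d $ i * x s $ i) (at s)" for s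
    using has_real_derivative_vec_nth[of x "diag_matrix d *v x s" s i] assms
    by (simp add: ode_solution_def diag_matrix_mult_vector_nth)
  from scalar_linear_ode_solution[OF this] show ?thesis
    using assms by (simp add: ode_solution_def)
qed

lemma theta_step_scalar_eq:
  fixes phi psi theta l z a b :: real
  assumes "phi \<noteq> 0" and "1 - phi * l * theta \<noteq> 0"
    and exact: "psi + phi * l * (1 - theta) = z * (1 - phi * l * theta)"
    and step: "(1 / phi) * (b - psi * a) = l * (theta * b + (1 - theta) * a)"
  shows "b = z * a"
proof -
  have "b * (1 - phi * l * theta) = (psi + phi * l * (1 - theta)) * a"
    using step \<open>phi \<noteq> 0\<close> by (simp add: field_simps)
  also have "\<dots> = z * a * (1 - phi * l * theta)"
    by (simp add: exact)
  finally show ?thesis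
    using assms(2) by simp
qed

theorem exact_theta_scheme_diag_matrix:
  assumes "phi \<noteq> 0"
    and nondeg: "\<And>i. 1 - phi * d $ i * theta \<noteq> 0"
    and exact: "\<And>i. psi + phi * d $ i * (1 - theta) = exp (d $ i * h) * (1 - phi * d $ i * theta)"
  shows "exact_scheme (theta_scheme phi psi theta (diag_matrix d)) h (diag_matrix d)"
  unfolding exact_scheme_def
proof (intro allI impI, elim conjE)
  fix x0 xs x k
  assume xs0: "xs 0 = x0"
    and steps: "\<forall>k. theta_scheme phi psi theta (diag_matrix d) (xs k) (xs (Suc k))"
    and sol: "ode_solution (diag_matrix d) x0 x"
  have "xs k $ i = exp (d $ i * h) ^ k * x0 $ i" for i
  proof (induction k)
    case 0
    then show ?case using xs0 by simp
  next
    case (Suc k)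
    have "(1 / phi) * (xs (Suc k) $ i - psi * xs k $ i)
        = d $ i * (theta * xs (Suc k) $ i + (1 - theta) * xs k $ i)"
      using arg_cong[OF steps[rule_format, of k, unfolded theta_scheme_def], of "\<lambda>v. v $ i"]
      by (simp add: diag_matrix_mult_vector_nth)
    then have "xs (Suc k) $ i = exp (d $ i * h) * xs k $ i"
      by (rule theta_step_scalar_eq[OF \<open>phi \<noteq> 0\<close> nondeg exact])
    then show ?case using Suc by simp
  qed
  then show "xs k = x (real k * h)"
    using ode_solution_diag_matrix_nth[OF sol]
    by (simp add: vec_eq_iff exp_of_nat_mult[symmetric] mult_ac)
qed

theorem theorem6:
  fixes l1 l2 h theta phi psi :: real
  assumes "l1 \<noteq> l2" and "h > 0"
    and "(l1 - l2) * (1 - theta) + theta * (l1 * exp (l1 * h) - l2 * exp (l2 * h)) \<noteq> 0"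
    and "phi = (exp (l1 * h) - exp (l2 * h)) /
               ((l1 - l2) * (1 - theta) + theta * (l1 * exp (l1 * h) - l2 * exp (l2 * h)))"
    and "psi = exp (l1 * h) * (1 - phi * l1 * theta) - phi * l1 * (1 - theta)"
    and "1 - phi * l1 * theta \<noteq> 0" and "1 - phi * l2 * theta \<noteq> 0"
  shows "exact_scheme (theta_scheme phi psi theta (J2 l1 l2)) h (J2 l1 l2)"
proof -
  let ?d = "vector [l1, l1, l2] :: real^3"
  have entries: "?d $ i = l1 \<or> ?d $ i = l2" for i
    using exhaust_3[of i] by auto
  have "phi \<noteq> 0"
    using assms(1-4) by simp
  have exact_l1: "psi + phi * l1 * (1 - theta) = exp (l1 * h) * (1 - phi * l1 * theta)"
    using assms(5) by simp
  have "phi * ((l1 - l2) * (1 - theta) + theta * (l1 * exp (l1 * h) - l2 * exp (l2 * h)))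
      = exp (l1 * h) - exp (l2 * h)"
    using assms(3,4) by simp
  then have exact_l2: "psi + phi * l2 * (1 - theta) = exp (l2 * h) * (1 - phi * l2 * theta)"
    using assms(5) by (simp add: algebra_simps)
  show ?thesis
    unfolding J2_eq_diag_matrix
  proof (rule exact_theta_scheme_diag_matrix[OF \<open>phi \<noteq> 0\<close>])
    fix i
    show "1 - phi * ?d $ i * theta \<noteq> 0"
      using entries[of i] assms(6,7) by auto
    show "psi + phi * ?d $ i * (1 - theta) = exp (?d $ i * h) * (1 - phi * ?d $ i * theta)"
      using entries[of i] exact_l1 exact_l2 by auto
  qed
qed

end
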